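(* Let $\ell$ be a prime and let $R,S,T$ be pairwise coprime positive integers. Let $S'=\prod_{q:\ \operatorname{ord}_q(S)\text{ odd}} q$, let $v$ be the positive integer with $SS'=v^2$, and write $TS'=mn^2$ with $m$ a squarefree positive integer and $n$ a positive integer. Let $K=\mathbb{Q}(\sqrt{-m})$ with ring of integers $\mathcal{O}$. Suppose (i) $\operatorname{ord}_{\mathfrak q}(n\sqrt{-m})<\ell$ for all prime ideals $\mathfrak q$ of $\mathcal{O}$; (ii) for each $c\in\{1,-1,-2\}$ the polynomial $X^\ell+(c-X)^\ell-2$ has no roots in $\mathcal{O}$; (iii) the only root of $X^\ell+(2-X)^\ell-2$ in $\mathcal{O}$ is $X=1$. Then the only solution of \[ v\sigma^\ell+n\sqrt{-m}=n\sqrt{-m}\,\eta^\ell \] with $\sigma\in\mathbb{Z}$ and $\eta\in K$ is $\sigma=0$, $\eta=1$. *)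

theory Defs
  imports Complex_Main "HOL-Computational_Algebra.Polynomial" "HOL-Computational_Algebra.Squarefree"
    "HOL-Computational_Algebra.Primes" "HOL-Algebra.Ideal_Product"
begin

definition odd_part_rad :: "nat \<Rightarrow> nat" where
  "odd_part_rad S = (\<Prod>q \<in> {q. prime q \<and> odd (multiplicity q S)}. q)"

definition sqrt_neg :: "nat \<Rightarrow> complex" where
  "sqrt_neg m = \<i> * complex_of_real (sqrt (real m))"

definition quad_field :: "nat \<Rightarrow> complex set" where
  "quad_field m = {of_rat a + of_rat b * sqrt_neg m | a b. True}"

definition quad_ints :: "nat \<Rightarrow> complex set" where
  "quad_ints m = {z \<in> quad_field m. algebraic_int z}"

definition quad_ring :: "nat \<Rightarrow> complex ring" where
  "quad_ring m = \<lparr> carrier = quad_ints m, mult = (*), one = 1, zero = 0, add = (+) \<rparr>"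

definition ideal_ord :: "('a, 'b) ring_scheme \<Rightarrow> 'a set \<Rightarrow> 'a \<Rightarrow> nat" where
  "ideal_ord R q x = (GREATEST k. x \<in> q [^]\<^bsub>ideals_set R\<^esub> k)"

end

theory Submission
  imports Defs
begin

text \<open>
  Write \<open>\<beta> = n \<surd>-m\<close> and \<open>\<gamma> = v \<sigma>^l\<close>, so that \<open>\<eta>^l = 1 + \<gamma>/\<beta>\<close>; since \<open>\<beta>\<close> is purely imaginary,
  \<open>\<eta>^l + (cnj \<eta>)^l = 2\<close> and \<open>N(\<eta>)^l = 1 + \<gamma>\<^sup>2/(n\<^sup>2 m)\<close>. If \<open>nm\<close> did not divide \<open>\<gamma>\<close>, some prime \<open>p\<close>
  would divide \<open>nm\<close> to a higher power than \<open>\<gamma>\<close>; comparing \<open>p\<close>-adic valuations in the norm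
  equation (\<open>l\<close> is odd, \<open>m\<close> squarefree) gives \<open>p^l | n\<close>, or \<open>p | m\<close> and \<open>l \<le> 2 ord\<^sub>p(n) + 1\<close>.
  Either way \<open>\<beta>\<close> lies in \<open>q^l\<close> for a prime ideal \<open>q\<close> above \<open>p\<close>, contradicting (i). Hence
  \<open>\<eta>^l = 1 - t \<surd>-m\<close> is integral, so \<open>\<eta>\<close> is integral and its trace \<open>c\<close> divides
  \<open>\<eta>^l + (cnj \<eta>)^l = 2\<close>. As \<open>cnj \<eta> = c - \<eta>\<close>, \<open>\<eta>\<close> is a root of \<open>X^l + (c - X)^l - 2\<close> with
  \<open>c \<in> {1, -1, -2, 2}\<close>, and (ii), (iii) leave only \<open>\<eta> = 1\<close>, hence \<open>\<sigma> = 0\<close>.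
\<close>

section \<open>Elementary arithmetic\<close>

lemma squarefree_mod_4: "squarefree (m::nat) \<Longrightarrow> m mod 4 \<noteq> 0"
  using squarefreeD[of m 2] by (auto simp: mod_eq_0_iff_dvd)

lemma square_mod_4: "(x::int)\<^sup>2 mod 4 = (if even x then 0 else 1)"
proof (cases "even x")
  case True
  then show ?thesis by (auto simp: power2_eq_square)
next
  case False
  then obtain y where "x = 2 * y + 1" using oddE by blast
  then have "x\<^sup>2 = 1 + (y * y + y) * 4" by (simp add: power2_eq_square algebra_simps)
  then have "x\<^sup>2 mod 4 = 1 mod 4" by (simp only: mod_mult_self1)
  then show ?thesis using False by simp
qed

lemma four_dvd_norm_parity:
  fixes X Y :: int
  assumes "m mod 4 \<noteq> 0" "4 dvd X\<^sup>2 + int m * Y\<^sup>2"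
  shows "if m mod 4 = 3 then even (X - Y) else even X \<and> even Y"
proof -
  have "(X\<^sup>2 mod 4 + ((int m mod 4) * (Y\<^sup>2 mod 4)) mod 4) mod 4 = 0"
    using assms(2) by (simp add: mod_add_left_eq mod_add_right_eq mod_mult_left_eq mod_mult_right_eq)
  moreover have "int m mod 4 = int (m mod 4)" by (simp add: zmod_int)
  moreover have "m mod 4 = 1 \<or> m mod 4 = 2 \<or> m mod 4 = 3" using assms(1) by auto
  ultimately show ?thesis unfolding square_mod_4
    by (cases "even X"; cases "even Y") auto
qed

lemma squarefree_imp_prime_square_not_dvd:
  assumes "squarefree m" "prime (p::int)"
  shows "\<not> p\<^sup>2 dvd int m"
proof
  assume "p\<^sup>2 dvd int m"
  moreover have "p\<^sup>2 = int (nat p ^ 2)" using prime_gt_0_int[OF assms(2)] by simp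
  ultimately have "nat p ^ 2 dvd m" by (simp only: of_nat_dvd_iff)
  then have "is_unit (nat p)" using assms(1) squarefreeD by blast
  then show False using prime_gt_1_int[OF assms(2)] by simp
qed

lemma Ints_if_bounded_denominator_powers:
  fixes r :: rat
  assumes "C \<noteq> 0" "\<And>k. of_int C * r ^ k \<in> \<int>"
  shows "r \<in> \<int>"
proof -
  obtain A B where "quotient_of r = (A, B)" by (cases "quotient_of r")
  then have B: "B > 0" "coprime A B" and r: "r = of_int A / of_int B"
    by (simp_all add: quotient_of_denom_pos quotient_of_coprime quotient_of_div)
  have dvd: "B ^ k dvd C" for k
  proof -
    from assms(2)[of k] obtain t where "of_int C * r ^ k = of_int t" by (auto elim: Ints_cases)
    then have "of_int (C * A ^ k) = (of_int (t * B ^ k) :: rat)"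
      using B by (simp add: r power_divide field_simps)
    then have "B ^ k dvd C * A ^ k" by (metis dvd_triv_right of_int_eq_iff)
    moreover have "coprime (B ^ k) (A ^ k)" using B by (simp add: coprime_commute)
    ultimately show ?thesis using coprime_dvd_mult_left_iff by blast
  qed
  have "B = 1"
  proof (rule ccontr)
    assume "B \<noteq> 1"
    with B have "2 ^ nat \<bar>C\<bar> \<le> B ^ nat \<bar>C\<bar>" by (simp add: power_mono)
    also have "\<dots> \<le> \<bar>C\<bar>" using dvd_imp_le_int[OF assms(1) dvd] B by simp
    finally show False
      by (metis abs_ge_zero int_nat_eq less_exp not_le of_nat_less_iff of_nat_numeral of_nat_power)
  qed
  then show ?thesis using r by simp
qed

lemma squarefree_mult_square_in_Ints:
  fixes c :: rat
  assumes "squarefree m" "of_nat m * c\<^sup>2 \<in> \<int>"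
  shows "c \<in> \<int>"
proof -
  obtain K where K: "of_nat m * c\<^sup>2 = of_int K" using assms(2) by (auto elim: Ints_cases)
  obtain A B where "quotient_of c = (A, B)" by (cases "quotient_of c")
  then have B: "B > 0" "coprime A B" and c: "c = of_int A / of_int B"
    by (simp_all add: quotient_of_denom_pos quotient_of_coprime quotient_of_div)
  have "of_int (int m * A\<^sup>2) = (of_int (K * B\<^sup>2) :: rat)"
    using K B unfolding c by (simp add: power_divide field_simps)
  then have "B\<^sup>2 dvd int m * A\<^sup>2" by (metis dvd_triv_right of_int_eq_iff)
  moreover have "coprime (B\<^sup>2) (A\<^sup>2)" using B by (simp add: coprime_commute)
  ultimately have "B\<^sup>2 dvd int m"
    using coprime_dvd_mult_left_iff by blast
  moreover have "B\<^sup>2 = int (nat B ^ 2)" using B by simp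
  ultimately have "nat B ^ 2 dvd m" by (simp only: of_nat_dvd_iff)
  then have "is_unit (nat B)" using assms(1) squarefreeD by blast
  then have "B = 1" using B by simp
  then show ?thesis using c by simp
qed

lemma multiplicity_power_ratio:
  fixes p A B X Y :: int
  assumes p: "prime p" and B: "B > 0" "coprime A B" and X: "X \<noteq> 0" and Y: "Y \<noteq> 0" "X + Y \<noteq> 0"
    and eq: "A ^ l * X = B ^ l * (X + Y)" and lt: "multiplicity p Y < multiplicity p X"
  shows "multiplicity p X = l * multiplicity p B + multiplicity p Y" "multiplicity p B > 0"
proof -
  have pe: "prime_elem p" using p by (rule prime_imp_prime_elem)
  have A: "A \<noteq> 0"
  proof
    assume "A = 0"
    then show False using eq B(1) Y by (cases l) auto
  qed
  have sum: "multiplicity p (X + Y) = multiplicity p Y"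
    using multiplicity_sum_lt[OF lt Y(1) X] by (simp add: add.commute)
  have key: "l * multiplicity p A + multiplicity p X = l * multiplicity p B + multiplicity p Y"
    using arg_cong[OF eq, of "multiplicity p"] A X B Y(2) sum
    by (simp add: prime_elem_multiplicity_mult_distrib[OF pe] prime_elem_multiplicity_power_distrib[OF pe])
  show pos: "multiplicity p B > 0"
  proof (rule ccontr)
    assume "\<not> ?thesis"
    with key lt show False by simp
  qed
  then have "p dvd B" using prime_elem_multiplicity_eq_zero_iff[OF pe, of B] B(1) by linarith
  then have "\<not> p dvd A" using B(2) p by (meson coprime_common_divisor not_prime_unit)
  then have "multiplicity p A = 0" by (rule not_dvd_imp_multiplicity_0)
  then show "multiplicity p X = l * multiplicity p B + multiplicity p Y" using key by simp
qed

lemma multiplicity_squarefree: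
  fixes p :: int
  assumes "squarefree m" "prime p" "m > 0"
  shows "multiplicity p (int m) = (if p dvd int m then 1 else 0)"
proof (cases "p dvd int m")
  case True
  have "multiplicity p (int m) \<le> 1"
  proof (rule ccontr)
    assume "\<not> ?thesis"
    then have "p\<^sup>2 dvd int m" by (intro multiplicity_dvd') simp
    then show False using squarefree_imp_prime_square_not_dvd[OF assms(1,2)] by blast
  qed
  moreover have "multiplicity p (int m) \<noteq> 0"
    using True assms(3) prime_elem_multiplicity_eq_zero_iff[OF prime_imp_prime_elem[OF assms(2)]] by simp
  ultimately show ?thesis using True by simp
qed (simp add: not_dvd_imp_multiplicity_0)

lemma high_valuation_from_norm_equation:
  fixes p A B g :: int and l n m :: nat
  assumes p: "prime p" and l: "odd l" and n: "n > 0" and m: "m > 0" "squarefree m"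
    and g: "g \<noteq> 0" and B: "B > 0" "coprime A B"
    and eq: "A ^ l * (int n ^ 2 * int m) = B ^ l * (int n ^ 2 * int m + g ^ 2)"
    and lt: "multiplicity p g < multiplicity p (int n * int m)"
  shows "if p dvd int m then l \<le> 2 * multiplicity p (int n) + 1 else l \<le> multiplicity p (int n)"
proof -
  have pe: "prime_elem p" using p by (rule prime_imp_prime_elem)
  define a where "a = multiplicity p (int n)"
  define \<mu> :: nat where "\<mu> = (if p dvd int m then 1 else 0)"
  have mult_m: "multiplicity p (int m) = \<mu>"
    unfolding \<mu>_def by (rule multiplicity_squarefree[OF m(2) p m(1)])
  have mult_nm: "multiplicity p (int n * int m) = a + \<mu>"
    unfolding a_def mult_m[symmetric] using n m by (simp add: prime_elem_multiplicity_mult_distrib[OF pe])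
  have mult_X: "multiplicity p (int n ^ 2 * int m) = 2 * a + \<mu>"
    unfolding a_def mult_m[symmetric] using n m
    by (simp add: prime_elem_multiplicity_mult_distrib[OF pe] prime_elem_multiplicity_power_distrib[OF pe])
  have mult_Y: "multiplicity p (g ^ 2) = 2 * multiplicity p g"
    using g by (simp add: prime_elem_multiplicity_power_distrib[OF pe])
  have "multiplicity p (g ^ 2) < multiplicity p (int n ^ 2 * int m)"
    using lt unfolding mult_nm mult_X mult_Y \<mu>_def by (simp split: if_splits)
  moreover have "int n ^ 2 * int m + g ^ 2 > 0" using n m by (intro add_pos_nonneg) auto
  ultimately have key: "2 * a + \<mu> = l * multiplicity p B + 2 * multiplicity p g"
    and pos: "multiplicity p B > 0"
    using multiplicity_power_ratio[OF p B _ _ _ eq] n m g unfolding mult_X mult_Y by auto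
  show ?thesis
  proof (cases "p dvd int m")
    case True
    have "l \<le> l * multiplicity p B" using pos by simp
    moreover have "\<mu> = 1" using True unfolding \<mu>_def by simp
    ultimately have "l \<le> 2 * a + 1" using key by linarith
    then show ?thesis using True unfolding a_def by simp
  next
    case False
    then have "\<mu> = 0" unfolding \<mu>_def by simp
    with key have "even (l * multiplicity p B)" by presburger
    with l have "even (multiplicity p B)" by simp
    with pos have "2 \<le> multiplicity p B" by presburger
    then have "l * 2 \<le> l * multiplicity p B" by (rule mult_le_mono2)
    then have "l \<le> a" using key \<open>\<mu> = 0\<close> by linarith
    then show ?thesis using False unfolding a_def by simp
  qed
qed

lemma algebraic_int_monic_relation:
  fixes z :: "'a :: field_char_0"
  assumes "algebraic_int z"
  obtains d c where "z ^ d = (\<Sum>i<d. of_int (c i) * z ^ i)"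
proof -
  from assms obtain p where p: "poly (map_poly of_int p) z = 0" "lead_coeff p = 1"
    unfolding algebraic_int_altdef_ipoly by blast
  define d where "d = degree p"
  have "0 = (\<Sum>i\<le>d. of_int (coeff p i) * z ^ i)"
    using p(1) unfolding poly_altdef d_def by (simp add: coeff_map_poly degree_map_poly)
  also have "\<dots> = (\<Sum>i<d. of_int (coeff p i) * z ^ i) + z ^ d"
    using p(2) by (simp add: lessThan_Suc_atMost[symmetric] d_def)
  finally have "z ^ d = (\<Sum>i<d. of_int (- coeff p i) * z ^ i)"
    by (simp add: sum_negf eq_neg_iff_add_eq_0 add.commute)
  then show ?thesis by (rule that)
qed

lemma algebraic_int_powers_common_denominator:
  fixes z :: "'a :: field_char_0"
  assumes z: "algebraic_int z" and D: "D \<noteq> 0" "of_int D * z \<in> L"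
    and L_add: "\<And>x y. x \<in> L \<Longrightarrow> y \<in> L \<Longrightarrow> x + y \<in> L"
    and L_mult: "\<And>x y. x \<in> L \<Longrightarrow> y \<in> L \<Longrightarrow> x * y \<in> L"
    and L_of_int: "\<And>c. of_int c \<in> L"
  obtains E where "E \<noteq> 0" "\<And>k. of_int E * z ^ k \<in> L"
proof -
  have L_sum: "(\<And>i. i \<in> A \<Longrightarrow> f i \<in> L) \<Longrightarrow> sum f A \<in> L" for f and A :: "nat set"
    using L_of_int[of 0] by (induction A rule: infinite_finite_induct) (auto intro: L_add)
  have L_power: "x \<in> L \<Longrightarrow> x ^ k \<in> L" for x k
    using L_of_int[of 1] by (induction k) (auto intro: L_mult)
  obtain d c where z_d: "z ^ d = (\<Sum>i<d. of_int (c i) * z ^ i)"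
    using algebraic_int_monic_relation[OF z] .
  have "of_int (D ^ d) * z ^ k \<in> L" for k
  proof (induction k rule: less_induct)
    case (less k)
    show ?case
    proof (cases "k < d")
      case True
      then have "of_int (D ^ d) * z ^ k = of_int (D ^ (d - k)) * (of_int D * z) ^ k"
        by (simp add: power_mult_distrib flip: power_add)
      also have "\<dots> \<in> L"
        by (intro L_mult L_power L_of_int D(2))
      finally show ?thesis .
    next
      case False
      then have "z ^ k = z ^ (k - d) * z ^ d" by (simp flip: power_add)
      then have "of_int (D ^ d) * z ^ k = (\<Sum>i<d. of_int (c i) * (of_int (D ^ d) * z ^ (k - d + i)))"
        unfolding z_d by (simp add: sum_distrib_left power_add mult_ac)
      also have "\<dots> \<in> L"
        using False by (intro L_sum L_mult L_of_int less) auto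
      finally show ?thesis .
    qed
  qed
  then show ?thesis using that[of "D ^ d"] D(1) by simp
qed

section \<open>The field \<open>\<rat>(\<surd>-m)\<close>\<close>

lemma sqrt_neg_mult_self: "sqrt_neg m * sqrt_neg m = - of_nat m"
  unfolding sqrt_neg_def by (simp add: algebra_simps flip: of_real_mult)

lemma cnj_sqrt_neg [simp]: "cnj (sqrt_neg m) = - sqrt_neg m"
  unfolding sqrt_neg_def by simp

lemma sqrt_neg_nonzero: "m > 0 \<Longrightarrow> sqrt_neg m \<noteq> 0"
  unfolding sqrt_neg_def by simp

lemma scaled_sqrt_neg_mult_self:
  "(of_nat n * sqrt_neg m) * (of_nat n * sqrt_neg m) = - of_nat (n\<^sup>2 * m)"
proof -
  have "(of_nat n * sqrt_neg m) * (of_nat n * sqrt_neg m) = of_nat n * of_nat n * (sqrt_neg m * sqrt_neg m)"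
    by (simp only: mult_ac)
  then show ?thesis by (simp add: sqrt_neg_mult_self power2_eq_square)
qed

lemma cnj_of_rat [simp]: "cnj (of_rat r) = of_rat r"
  by (cases r) (simp add: of_rat_divide Fract_of_int_quotient)

lemma quad_field_norm:
  "(of_rat a + of_rat b * sqrt_neg m) * cnj (of_rat a + of_rat b * sqrt_neg m)
     = of_rat (a\<^sup>2 + of_nat m * b\<^sup>2)"
proof -
  have "(of_rat a + of_rat b * sqrt_neg m) * cnj (of_rat a + of_rat b * sqrt_neg m)
      = of_rat a * of_rat a - of_rat b * of_rat b * (sqrt_neg m * sqrt_neg m)"
    by (simp add: algebra_simps)
  then show ?thesis
    by (simp add: sqrt_neg_mult_self of_rat_add of_rat_mult power2_eq_square)
qed

lemma norm_power_equation:
  fixes \<eta> :: complex and \<gamma> :: int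
  assumes m: "m > 0" and n: "n > 0" and \<eta>: "\<eta> \<in> quad_field m"
    and \<eta>_l: "\<eta> ^ l = 1 + of_int \<gamma> / (of_nat n * sqrt_neg m)"
  obtains A B where "B > 0" "coprime A B"
    "A ^ l * (int n ^ 2 * int m) = B ^ l * (int n ^ 2 * int m + \<gamma> ^ 2)"
proof -
  define \<beta> where "\<beta> = of_nat n * sqrt_neg m"
  have \<beta>: "\<beta> \<noteq> 0" "cnj \<beta> = - \<beta>" "\<beta> * \<beta> = - of_nat (n ^ 2 * m)"
    using n sqrt_neg_nonzero[OF m] scaled_sqrt_neg_mult_self[of n m] by (simp_all add: \<beta>_def)
  obtain a b where \<eta>_ab: "\<eta> = of_rat a + of_rat b * sqrt_neg m"
    using \<eta> unfolding quad_field_def by blast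
  define r where "r = a\<^sup>2 + of_nat m * b\<^sup>2"
  have "of_rat (r ^ l) = (\<eta> * cnj \<eta>) ^ l"
    unfolding \<eta>_ab r_def quad_field_norm by (simp add: of_rat_power)
  also have "\<dots> = (1 + of_int \<gamma> / \<beta>) * (1 - of_int \<gamma> / \<beta>)"
    unfolding power_mult_distrib complex_cnj_power[symmetric] \<eta>_l \<beta>_def[symmetric] using \<beta>(2) by simp
  also have "\<dots> = 1 - of_int (\<gamma> ^ 2) / (\<beta> * \<beta>)"
    using \<beta>(1) by (simp add: field_simps power2_eq_square)
  also have "\<dots> = of_rat (1 + of_int (\<gamma> ^ 2) / of_nat (n ^ 2 * m))"
    unfolding \<beta>(3) by (simp add: of_rat_add of_rat_divide of_rat_mult of_rat_power)
  finally have r_l: "r ^ l = 1 + of_int (\<gamma> ^ 2) / of_nat (n ^ 2 * m)"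
    by (simp only: of_rat_eq_iff)
  obtain A B where "quotient_of r = (A, B)" by (cases "quotient_of r")
  then have B: "B > 0" "coprime A B" and r: "r = of_int A / of_int B"
    by (simp_all add: quotient_of_denom_pos quotient_of_coprime quotient_of_div)
  have "of_int A ^ l * of_nat (n ^ 2 * m) = of_int B ^ l * (of_nat (n ^ 2 * m) + rat_of_int (\<gamma> ^ 2))"
    using r_l B(1) n m unfolding r by (simp add: power_divide field_simps)
  then have "rat_of_int (A ^ l * (int n ^ 2 * int m)) = rat_of_int (B ^ l * (int n ^ 2 * int m + \<gamma> ^ 2))"
    by simp
  then show ?thesis using that B by (simp only: of_int_eq_iff)
qed

lemma divide_scaled_sqrt_neg:
  assumes "n > 0" "m > 0"
  shows "of_int (int n * int m * t) / (of_nat n * sqrt_neg m) = - (of_int t * sqrt_neg m)"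
proof -
  have "- (of_int t * sqrt_neg m) * (of_nat n * sqrt_neg m)
      = of_int t * of_nat n * - (sqrt_neg m * sqrt_neg m)"
    by (simp add: algebra_simps)
  also have "\<dots> = of_int (int n * int m * t)" unfolding sqrt_neg_mult_self by simp
  finally have "of_int (int n * int m * t) = - (of_int t * sqrt_neg m) * (of_nat n * sqrt_neg m)"
    by (rule sym)
  moreover have "of_nat n * sqrt_neg m \<noteq> 0" using assms sqrt_neg_nonzero[OF assms(2)] by simp
  ultimately show ?thesis by simp
qed

lemma power_plus_cnj_power_eq_2:
  assumes "\<eta> ^ l = 1 + of_int \<gamma> / (of_nat n * sqrt_neg m)"
  shows "\<eta> ^ l + cnj \<eta> ^ l = 2"
proof -
  have "cnj \<eta> ^ l = 1 - of_int \<gamma> / (of_nat n * sqrt_neg m)"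
    using arg_cong[OF assms, of cnj] by simp
  with assms show ?thesis by simp
qed

section \<open>The ring \<open>\<int>[\<omega>]\<close>\<close>

text \<open>\<open>\<omega>\<close> is a root of \<open>X\<^sup>2 - t X + N\<close> with \<open>t = omega_trace m\<close>, \<open>N = omega_norm m\<close>,
  and \<open>norm_form m u v\<close> is the norm of \<open>u + v \<omega>\<close>.\<close>

definition omega_trace :: "nat \<Rightarrow> int" where
  "omega_trace m = (if m mod 4 = 3 then 1 else 0)"

definition omega_norm :: "nat \<Rightarrow> int" where
  "omega_norm m = (if m mod 4 = 3 then (int m + 1) div 4 else int m)"

definition omega :: "nat \<Rightarrow> complex" where
  "omega m = (if m mod 4 = 3 then (1 + sqrt_neg m) / 2 else sqrt_neg m)"

definition Z_omega :: "nat \<Rightarrow> complex set" where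
  "Z_omega m = {of_int u + of_int v * omega m | u v. True}"

definition norm_form :: "nat \<Rightarrow> int \<Rightarrow> int \<Rightarrow> int" where
  "norm_form m u v = u\<^sup>2 + omega_trace m * u * v + omega_norm m * v\<^sup>2"

lemma omega_mult_self: "omega m * omega m = of_int (omega_trace m) * omega m - of_int (omega_norm m)"
proof (cases "m mod 4 = 3")
  case True
  then have "4 * omega_norm m = int m + 1"
    unfolding omega_norm_def by presburger
  from arg_cong[OF this, of "of_int :: int \<Rightarrow> complex"]
  have N: "of_int (omega_norm m) = (of_nat m + 1) / (4::complex)" by (simp add: field_simps)
  show ?thesis
    using True unfolding omega_def omega_trace_def N by (simp add: field_simps sqrt_neg_mult_self)
next
  case False
  then show ?thesis by (simp add: omega_def omega_trace_def omega_norm_def sqrt_neg_mult_self)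
qed

lemma cnj_omega: "cnj (omega m) = of_int (omega_trace m) - omega m"
  unfolding omega_def omega_trace_def by (simp add: field_simps)

lemma omega_discriminant:
  "4 * omega_norm m - (omega_trace m)\<^sup>2 = (if m mod 4 = 3 then int m else 4 * int m)"
  unfolding omega_norm_def omega_trace_def by simp presburger

lemma Z_omegaI [intro]: "of_int u + of_int v * omega m \<in> Z_omega m"
  unfolding Z_omega_def by blast

lemma Z_omegaE [elim]:
  assumes "z \<in> Z_omega m"
  obtains u v where "z = of_int u + of_int v * omega m"
  using assms unfolding Z_omega_def by blast

lemma Z_omega_of_int [simp, intro]: "of_int u \<in> Z_omega m"
  using Z_omegaI[of u 0 m] by simp

lemma Z_omega_of_nat [simp, intro]: "of_nat u \<in> Z_omega m"
  using Z_omega_of_int[of "int u" m] by simp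

lemma Z_omega_zero [simp, intro]: "0 \<in> Z_omega m"
  and Z_omega_one [simp, intro]: "1 \<in> Z_omega m"
  and Z_omega_numeral [simp, intro]: "numeral k \<in> Z_omega m"
  using Z_omega_of_nat[of 0 m] Z_omega_of_nat[of 1 m] Z_omega_of_nat[of "numeral k" m] by simp_all

lemma Z_omega_omega [simp, intro]: "omega m \<in> Z_omega m"
  using Z_omegaI[of 0 1 m] by simp

lemma Z_omega_mult_coords:
  "(of_int u1 + of_int v1 * omega m) * (of_int u2 + of_int v2 * omega m)
    = of_int (u1 * u2 - omega_norm m * v1 * v2)
      + of_int (u1 * v2 + u2 * v1 + omega_trace m * v1 * v2) * omega m"
proof -
  have "(of_int u1 + of_int v1 * omega m) * (of_int u2 + of_int v2 * omega m)
      = of_int u1 * of_int u2 + (of_int u1 * of_int v2 + of_int u2 * of_int v1) * omega m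
        + of_int v1 * of_int v2 * (omega m * omega m)"
    by (simp add: algebra_simps)
  then show ?thesis unfolding omega_mult_self by (simp add: algebra_simps)
qed

lemma Z_omega_add [intro]:
  assumes "x \<in> Z_omega m" "y \<in> Z_omega m"
  shows "x + y \<in> Z_omega m"
proof -
  from assms obtain u1 v1 u2 v2
    where "x = of_int u1 + of_int v1 * omega m" "y = of_int u2 + of_int v2 * omega m" by blast
  then have "x + y = of_int (u1 + u2) + of_int (v1 + v2) * omega m" by (simp add: algebra_simps)
  then show ?thesis by (simp only: Z_omegaI)
qed

lemma Z_omega_mult [intro]:
  assumes "x \<in> Z_omega m" "y \<in> Z_omega m"
  shows "x * y \<in> Z_omega m"
  using assms by (elim Z_omegaE) (simp only: Z_omega_mult_coords Z_omegaI)

lemma Z_omega_uminus [intro]: "x \<in> Z_omega m \<Longrightarrow> - x \<in> Z_omega m"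
  by (elim Z_omegaE) (metis Z_omegaI minus_add_distrib mult_minus_left of_int_minus)

lemma Z_omega_diff [intro]: "x \<in> Z_omega m \<Longrightarrow> y \<in> Z_omega m \<Longrightarrow> x - y \<in> Z_omega m"
  using Z_omega_add Z_omega_uminus by (metis diff_conv_add_uminus)

lemma Z_omega_power [intro]: "x \<in> Z_omega m \<Longrightarrow> x ^ k \<in> Z_omega m"
  by (induction k) auto

lemma Z_omega_sum [intro]: "(\<And>i. i \<in> A \<Longrightarrow> f i \<in> Z_omega m) \<Longrightarrow> sum f A \<in> Z_omega m"
  by (induction A rule: infinite_finite_induct) auto

lemma Z_omega_cnj [intro]: "x \<in> Z_omega m \<Longrightarrow> cnj x \<in> Z_omega m"
  by (elim Z_omegaE) (auto simp: cnj_omega)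

lemma sqrt_neg_in_Z_omega [simp, intro]: "sqrt_neg m \<in> Z_omega m"
proof -
  have "sqrt_neg m = (if m mod 4 = 3 then 2 * omega m - 1 else omega m)"
    by (simp add: omega_def field_simps)
  then show ?thesis by (auto intro!: Z_omega_diff Z_omega_mult)
qed

lemma Z_omega_norm:
  "(of_int u + of_int v * omega m) * cnj (of_int u + of_int v * omega m) = of_int (norm_form m u v)"
proof -
  have "(of_int u + of_int v * omega m) * cnj (of_int u + of_int v * omega m)
      = of_int u ^ 2 + of_int u * of_int v * of_int (omega_trace m)
        - of_int v ^ 2 * (omega m * omega m - of_int (omega_trace m) * omega m)"
    by (simp add: cnj_omega algebra_simps power2_eq_square)
  then show ?thesis unfolding omega_mult_self norm_form_def by simp
qed

lemma Z_omega_normE: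
  assumes "x \<in> Z_omega m"
  obtains N where "x * cnj x = of_int N"
  using assms Z_omega_norm by blast

lemma Z_omega_coords_unique:
  assumes "m > 0" "of_int u + of_int v * omega m = of_int u' + of_int v' * omega m"
  shows "u = u' \<and> v = v'"
proof -
  have "Im (omega m) \<noteq> 0"
    using assms(1) by (simp add: omega_def sqrt_neg_def)
  moreover have "of_int v * Im (omega m) = of_int v' * Im (omega m)"
    using arg_cong[OF assms(2), of Im] by simp
  ultimately have "v = v'" by simp
  with assms(2) show ?thesis by simp
qed

lemma norm_form_eq_norm: "(of_int r + omega m) * cnj (of_int r + omega m) = of_int (norm_form m r 1)"
  using Z_omega_norm[of r 1 m] by simp

lemma norm_form_shift: "norm_form m (r + p) 1 = norm_form m r 1 + p * (2 * r + omega_trace m + p)"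
  unfolding norm_form_def by (simp add: algebra_simps power2_eq_square)

lemma norm_form_root_identity:
  "(u1 * u2 - omega_norm m * v1 * v2) - r * (u1 * v2 + u2 * v1 + omega_trace m * v1 * v2)
     = (u1 - r * v1) * (u2 - r * v2) - v1 * v2 * norm_form m r 1"
  unfolding norm_form_def by (simp add: algebra_simps power2_eq_square)

lemma prime_square_dvd_discriminant:
  assumes "p\<^sup>2 dvd norm_form m r 1" "p dvd 2 * r + omega_trace m"
  shows "p\<^sup>2 dvd 4 * int m"
proof -
  have "p\<^sup>2 dvd 4 * norm_form m r 1 - (2 * r + omega_trace m)\<^sup>2"
    using assms(1) dvd_power_same[OF assms(2)] by (intro dvd_diff) auto
  also have "4 * norm_form m r 1 - (2 * r + omega_trace m)\<^sup>2 = 4 * omega_norm m - (omega_trace m)\<^sup>2"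
    by (simp add: norm_form_def algebra_simps power2_eq_square)
  also have "\<dots> dvd 4 * int m"
    unfolding omega_discriminant by simp
  finally show ?thesis .
qed

lemma norm_form_not_square_dvd:
  assumes "squarefree m" "prime p" "p dvd norm_form m r 1"
  shows "\<exists>r'. p dvd norm_form m r' 1 \<and> \<not> p\<^sup>2 dvd norm_form m r' 1"
proof (rule ccontr)
  assume "\<not> ?thesis"
  then have square: "\<And>r'. p dvd norm_form m r' 1 \<Longrightarrow> p\<^sup>2 dvd norm_form m r' 1" by blast
  have p2: "p\<^sup>2 dvd norm_form m r 1" using square[OF assms(3)] .
  have "p dvd norm_form m (r + p) 1" unfolding norm_form_shift using assms(3) by simp
  then have "p\<^sup>2 dvd norm_form m (r + p) 1 - norm_form m r 1" using square p2 by (blast intro: dvd_diff)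
  then have "p * p dvd p * (2 * r + omega_trace m + p)"
    unfolding norm_form_shift by (simp add: power2_eq_square)
  then have "p dvd 2 * r + omega_trace m + p" using assms(2) by simp
  then have d: "p dvd 2 * r + omega_trace m" by (simp add: dvd_add_left_iff)
  show False
  proof (cases "p = 2")
    case True
    with d have "m mod 4 \<noteq> 3" by (auto simp: omega_trace_def)
    then have "4 dvd r\<^sup>2 + int m * 1\<^sup>2"
      using p2 True by (simp add: norm_form_def omega_trace_def omega_norm_def)
    from four_dvd_norm_parity[OF squarefree_mod_4[OF assms(1)] this] \<open>m mod 4 \<noteq> 3\<close>
    show False by simp
  next
    case False
    then have "coprime p 2"
      using assms(2) by (intro primes_coprime) auto
    then have "coprime (p\<^sup>2) (2 * 2)"
      by (simp only: coprime_power_left_iff coprime_mult_right_iff simp_thms)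
    moreover have "p\<^sup>2 dvd (2 * 2) * int m" using prime_square_dvd_discriminant[OF p2 d] by simp
    ultimately have "p\<^sup>2 dvd int m" using coprime_dvd_mult_right_iff by blast
    then show False using squarefree_imp_prime_square_not_dvd[OF assms(1,2)] by blast
  qed
qed

lemma norm_form_prime_dvd:
  fixes p u v :: int
  assumes p: "prime p" and inert: "\<And>r. \<not> p dvd norm_form m r 1" and "p dvd norm_form m u v"
  shows "p dvd u \<and> p dvd v"
proof (cases "p dvd v")
  case True
  then obtain t where t: "v = p * t" by blast
  have "u\<^sup>2 = norm_form m u v - p * (omega_trace m * u * t + omega_norm m * p * t\<^sup>2)"
    unfolding t norm_form_def by (simp add: algebra_simps power2_eq_square)
  then have "p dvd u\<^sup>2" using assms(3) by (metis dvd_diff dvd_triv_left)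
  with True p show ?thesis using prime_dvd_power by blast
next
  case False
  then have "coprime v p" using p by (simp add: prime_imp_coprime coprime_commute)
  then obtain a b where ab: "a * v + b * p = 1" using bezout_int[of v p] by auto
  have "v\<^sup>2 * norm_form m (u * a) 1 - norm_form m u v
      = (a * v - 1) * (u\<^sup>2 * (a * v + 1) + omega_trace m * u * v)"
    unfolding norm_form_def by (simp add: algebra_simps power2_eq_square)
  also have "a * v - 1 = p * (- b)" using ab by (simp add: algebra_simps)
  finally have "p dvd v\<^sup>2 * norm_form m (u * a) 1 - norm_form m u v" by simp
  then have "p dvd v\<^sup>2 * norm_form m (u * a) 1" using assms(3) by (metis dvd_add diff_add_cancel)
  then have "p dvd v" using p inert by (simp add: prime_dvd_mult_iff prime_dvd_power_iff)
  with False show ?thesis by simp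
qed

section \<open>\<open>\<int>[\<omega>]\<close> is the ring of integers\<close>

lemma Z_omega_subset_quad_field: "Z_omega m \<subseteq> quad_field m"
proof
  fix z assume "z \<in> Z_omega m"
  then obtain u v where z: "z = of_int u + of_int v * omega m" by blast
  have "z = of_rat (of_int u + of_int v * of_int (omega_trace m) / 2)
            + of_rat (if m mod 4 = 3 then of_int v / 2 else of_int v) * sqrt_neg m"
    unfolding z omega_def omega_trace_def by (simp add: of_rat_add of_rat_divide of_rat_mult field_simps)
  then show "z \<in> quad_field m" unfolding quad_field_def by blast
qed

lemma algebraic_int_Z_omega:
  assumes "z \<in> Z_omega m"
  shows "algebraic_int z"
proof -
  obtain u v where z: "z = of_int u + of_int v * omega m" using assms by blast
  define t where "t = z + cnj z"
  have t: "t = of_int (2 * u + v * omega_trace m)"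
    unfolding t_def z by (simp add: cnj_omega algebra_simps)
  show ?thesis
  proof
    show "lead_coeff [:z * cnj z, -t, 1:] = 1" by simp
    show "\<forall>i. coeff [:z * cnj z, -t, 1:] i \<in> \<int>"
      using t Z_omega_norm[of u v m] by (auto simp: z coeff_pCons split: nat.splits)
    show "poly [:z * cnj z, -t, 1:] z = 0"
      unfolding t_def by (simp add: algebra_simps)
  qed
qed

lemma quad_norm_in_Ints:
  assumes "algebraic_int (of_rat a + of_rat b * sqrt_neg m)"
  shows "a\<^sup>2 + of_nat m * b\<^sup>2 \<in> \<int>"
proof -
  define z where "z = of_rat a + of_rat b * sqrt_neg m"
  obtain A1 B1 where a: "a = of_int A1 / of_int B1" "B1 > 0"
    by (cases a) (simp add: Fract_of_int_quotient)
  obtain A2 B2 where b: "b = of_int A2 / of_int B2" "B2 > 0"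
    by (cases b) (simp add: Fract_of_int_quotient)
  have "of_int (B1 * B2) * z = of_int (A1 * B2) + of_int (A2 * B1) * sqrt_neg m"
    using a(2) b(2) unfolding z_def a(1) b(1) by (simp add: of_rat_divide field_simps)
  also have "\<dots> \<in> Z_omega m" by (intro Z_omega_add Z_omega_mult) auto
  finally have "of_int (B1 * B2) * z \<in> Z_omega m" .
  moreover have "B1 * B2 \<noteq> 0" using a(2) b(2) by simp
  ultimately obtain E where E: "E \<noteq> 0" "\<And>k. of_int E * z ^ k \<in> Z_omega m"
    using algebraic_int_powers_common_denominator[OF assms[folded z_def] _ _ Z_omega_add Z_omega_mult
        Z_omega_of_int] by blast
  have powers: "of_int (E\<^sup>2) * (a\<^sup>2 + of_nat m * b\<^sup>2) ^ k \<in> \<int>" for k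
  proof -
    obtain N where N: "(of_int E * z ^ k) * cnj (of_int E * z ^ k) = of_int N"
      using Z_omega_normE[OF E(2)] .
    have "(of_int E * z ^ k) * cnj (of_int E * z ^ k) = (of_int E * of_int E) * (z ^ k * cnj z ^ k)"
      by (simp only: complex_cnj_mult complex_cnj_of_int complex_cnj_power mult_ac)
    also have "\<dots> = of_int (E\<^sup>2) * (z * cnj z) ^ k"
      by (simp only: power_mult_distrib power2_eq_square of_int_mult)
    also have "\<dots> = of_rat (of_int (E\<^sup>2) * (a\<^sup>2 + of_nat m * b\<^sup>2) ^ k)"
      unfolding z_def quad_field_norm by (simp add: of_rat_mult of_rat_power)
    finally have "of_rat (of_int (E\<^sup>2) * (a\<^sup>2 + of_nat m * b\<^sup>2) ^ k) = (of_rat (of_int N) :: complex)"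
      unfolding N by simp
    then show ?thesis unfolding of_rat_eq_iff by simp
  qed
  show ?thesis
    by (rule Ints_if_bounded_denominator_powers[of "E\<^sup>2"]) (use E(1) powers in auto)
qed

lemma quad_ints_half_integral:
  assumes "squarefree m" "z \<in> quad_ints m"
  obtains X Y where "z = of_int X / 2 + of_int Y / 2 * sqrt_neg m" "4 dvd X\<^sup>2 + int m * Y\<^sup>2"
proof -
  obtain a b where z: "z = of_rat a + of_rat b * sqrt_neg m" and z_int: "algebraic_int z"
    using assms(2) unfolding quad_ints_def quad_field_def by blast
  have "algebraic_int (of_rat (a + 1) + of_rat b * sqrt_neg m)"
  proof (rule algebraic_int_root[OF z_int, of "[:-1, 1:]"])
    show "poly [:-1, 1:] (of_rat (a + 1) + of_rat b * sqrt_neg m) = z"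
      unfolding z by (simp add: of_rat_add)
  qed (auto simp: coeff_pCons split: nat.splits)
  from quad_norm_in_Ints[OF this] quad_norm_in_Ints[OF z_int[unfolded z]]
  have "((a + 1)\<^sup>2 + of_nat m * b\<^sup>2) - (a\<^sup>2 + of_nat m * b\<^sup>2) - 1 \<in> \<int>"
    by (intro Ints_diff Ints_1)
  also have "((a + 1)\<^sup>2 + of_nat m * b\<^sup>2) - (a\<^sup>2 + of_nat m * b\<^sup>2) - 1 = 2 * a"
    by (simp add: power2_eq_square algebra_simps)
  finally obtain X where X: "2 * a = of_int X" by (auto elim: Ints_cases)
  from quad_norm_in_Ints[OF z_int[unfolded z]]
  obtain N where N: "a\<^sup>2 + of_nat m * b\<^sup>2 = of_int N" by (auto elim: Ints_cases)
  have "of_nat m * (2 * b)\<^sup>2 = of_int (4 * N - X\<^sup>2)"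
    using N X by (simp add: power2_eq_square algebra_simps flip: X N)
  then obtain Y where Y: "2 * b = of_int Y"
    using squarefree_mult_square_in_Ints[OF assms(1), of "2 * b"] by (auto elim: Ints_cases)
  have "of_int (X\<^sup>2 + int m * Y\<^sup>2) = (of_int (4 * N) :: rat)"
    using N by (simp flip: X Y add: power2_eq_square algebra_simps)
  then have "X\<^sup>2 + int m * Y\<^sup>2 = 4 * N" by (simp only: of_int_eq_iff)
  have a_X: "a = of_int X / 2" and b_Y: "b = of_int Y / 2"
    using X Y by (simp_all add: field_simps)
  have "z = of_int X / 2 + of_int Y / 2 * sqrt_neg m"
    unfolding z a_X b_Y by (simp add: of_rat_divide)
  moreover have "4 dvd X\<^sup>2 + int m * Y\<^sup>2" using \<open>X\<^sup>2 + int m * Y\<^sup>2 = 4 * N\<close> by simp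
  ultimately show ?thesis by (rule that)
qed

lemma half_integral_in_Z_omega:
  assumes "m mod 4 \<noteq> 0" "4 dvd X\<^sup>2 + int m * Y\<^sup>2"
  shows "of_int X / 2 + of_int Y / 2 * sqrt_neg m \<in> Z_omega m"
proof (cases "m mod 4 = 3")
  case True
  with four_dvd_norm_parity[OF assms] have "even (X - Y)" by simp
  then obtain u where "X = 2 * u + Y" by (metis evenE eq_diff_eq add.commute)
  then have "of_int X / 2 + of_int Y / 2 * sqrt_neg m = of_int u + of_int Y * omega m"
    unfolding omega_def using True by (simp add: field_simps)
  then show ?thesis by (simp only: Z_omegaI)
next
  case False
  with four_dvd_norm_parity[OF assms] obtain u v where "X = 2 * u" "Y = 2 * v"
    by (auto elim!: evenE)
  then have "of_int X / 2 + of_int Y / 2 * sqrt_neg m = of_int u + of_int v * omega m"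
    unfolding omega_def using False by simp
  then show ?thesis by (simp only: Z_omegaI)
qed

lemma quad_ints_eq_Z_omega:
  assumes "squarefree m"
  shows "quad_ints m = Z_omega m"
proof
  show "Z_omega m \<subseteq> quad_ints m"
    unfolding quad_ints_def using Z_omega_subset_quad_field algebraic_int_Z_omega by blast
  show "quad_ints m \<subseteq> Z_omega m"
    using quad_ints_half_integral[OF assms] half_integral_in_Z_omega[OF squarefree_mod_4[OF assms]]
    by blast
qed

section \<open>Powers of ideals\<close>

lemma ideal_ord_geI:
  fixes l K :: nat
  assumes "x \<in> I [^]\<^bsub>ideals_set R\<^esub> l" and "\<And>k::nat. x \<in> I [^]\<^bsub>ideals_set R\<^esub> k \<Longrightarrow> k \<le> K"
  shows "l \<le> ideal_ord R I x"
  unfolding ideal_ord_def by (rule Greatest_le_nat[of _ l K]) (use assms in auto)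

context cring
begin

lemma ideals_set_one [simp]: "\<one>\<^bsub>ideals_set R\<^esub> = carrier R"
  and ideals_set_mult [simp]: "I \<otimes>\<^bsub>ideals_set R\<^esub> J = I \<cdot> J"
  by (simp_all add: ideals_set_def)

lemma ideal_pow_is_ideal: "ideal I R \<Longrightarrow> ideal (I [^]\<^bsub>ideals_set R\<^esub> (k::nat)) R"
  by (induction k) (simp_all add: oneideal ideal_prod_is_ideal)

lemma ideal_pow_carrier: "ideal I R \<Longrightarrow> x \<in> I [^]\<^bsub>ideals_set R\<^esub> (k::nat) \<Longrightarrow> x \<in> carrier R"
  using ideal.Icarr[OF ideal_pow_is_ideal] .

lemma ideal_pow_mult:
  assumes I: "ideal I R" and x: "x \<in> I [^]\<^bsub>ideals_set R\<^esub> (i::nat)"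
  shows "y \<in> I [^]\<^bsub>ideals_set R\<^esub> (j::nat) \<Longrightarrow> x \<otimes> y \<in> I [^]\<^bsub>ideals_set R\<^esub> (i + j)"
proof (induction j arbitrary: y)
  case 0
  then show ?case
    using ideal.I_r_closed[OF ideal_pow_is_ideal[OF I] x] by simp
next
  case (Suc j)
  from Suc.prems have "y \<in> (I [^]\<^bsub>ideals_set R\<^esub> j) \<cdot> I" by simp
  then show ?case
  proof (induction y rule: ideal_prod.induct)
    case (prod y z)
    have "(x \<otimes> y) \<otimes> z \<in> (I [^]\<^bsub>ideals_set R\<^esub> (i + j)) \<cdot> I"
      by (rule ideal_prod.prod[OF Suc.IH[OF prod(1)] prod(2)])
    moreover have "(x \<otimes> y) \<otimes> z = x \<otimes> (y \<otimes> z)"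
      using ideal_pow_carrier[OF I x] ideal_pow_carrier[OF I prod(1)] ideal.Icarr[OF I prod(2)]
      by (rule m_assoc)
    ultimately show ?case by simp
  next
    case (sum s1 s2)
    have "s1 \<in> carrier R" "s2 \<in> carrier R"
      using sum ideal_prod_in_carrier[OF ideal_pow_is_ideal[OF I] I] by blast+
    then have "x \<otimes> (s1 \<oplus> s2) = x \<otimes> s1 \<oplus> x \<otimes> s2"
      using ideal_pow_carrier[OF I x] by (simp add: r_distr)
    then show ?case
      using sum ideal_pow_is_ideal[OF I, of "Suc (i + j)"]
      by (simp add: additive_subgroup.a_closed ideal.axioms(1))
  qed
qed

lemma ideal_pow_one [simp]: "ideal I R \<Longrightarrow> I [^]\<^bsub>ideals_set R\<^esub> (1::nat) = I"
  using ideal_prod_one[of I] ideal_prod_commute[of I "carrier R"] oneideal by simp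

lemma ideal_pow_nat_pow:
  assumes I: "ideal I R" and x: "x \<in> I [^]\<^bsub>ideals_set R\<^esub> (j::nat)"
  shows "x [^] k \<in> I [^]\<^bsub>ideals_set R\<^esub> (j * k)"
proof (induction k)
  case 0
  then show ?case using ideal_pow_carrier[OF I x] by simp
next
  case (Suc k)
  then show ?case
    using ideal_pow_mult[OF I Suc x] ideal_pow_carrier[OF I x] by (simp add: add.commute m_comm)
qed

lemma ideal_pow_antimono:
  assumes I: "ideal I R" and "j \<le> k"
  shows "I [^]\<^bsub>ideals_set R\<^esub> (k::nat) \<subseteq> I [^]\<^bsub>ideals_set R\<^esub> j"
  using assms(2)
proof (induction k)
  case (Suc k)
  have "I [^]\<^bsub>ideals_set R\<^esub> Suc k \<subseteq> I [^]\<^bsub>ideals_set R\<^esub> k"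
    using ideal_prod_inter[OF ideal_pow_is_ideal[OF I] I] by simp
  with Suc show ?case by (cases "j = Suc k") auto
qed simp

lemma ideal_pow_scaled_into_multiples:
  assumes I: "ideal I R" and s: "s \<in> carrier R" and c: "c \<in> carrier R"
    and scaled: "\<And>x. x \<in> I \<Longrightarrow> \<exists>w \<in> carrier R. s \<otimes> x = c \<otimes> w"
  shows "x \<in> I [^]\<^bsub>ideals_set R\<^esub> (k::nat) \<Longrightarrow> \<exists>w \<in> carrier R. s [^] k \<otimes> x = c [^] k \<otimes> w"
proof (induction k arbitrary: x)
  case 0
  then show ?case by auto
next
  case (Suc k)
  from Suc.prems have "x \<in> (I [^]\<^bsub>ideals_set R\<^esub> k) \<cdot> I" by simp
  then show ?case
  proof (induction x rule: ideal_prod.induct)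
    case (prod y z)
    obtain w1 where w1: "w1 \<in> carrier R" "s [^] k \<otimes> y = c [^] k \<otimes> w1"
      using Suc.IH prod(1) by blast
    obtain w2 where w2: "w2 \<in> carrier R" "s \<otimes> z = c \<otimes> w2"
      using scaled prod(2) by blast
    have y: "y \<in> carrier R" and z: "z \<in> carrier R"
      using ideal_pow_carrier[OF I prod(1)] ideal.Icarr[OF I prod(2)] .
    have "s [^] Suc k \<otimes> (y \<otimes> z) = (s [^] k \<otimes> y) \<otimes> (s \<otimes> z)"
      using s y z by (simp add: m_ac)
    also have "\<dots> = c [^] Suc k \<otimes> (w1 \<otimes> w2)"
      unfolding w1(2) w2(2) using c w1(1) w2(1) by (simp add: m_ac)
    finally show ?case using w1(1) w2(1) by blast
  next
    case (sum s1 s2)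
    then obtain w1 w2 where w: "w1 \<in> carrier R" "s [^] Suc k \<otimes> s1 = c [^] Suc k \<otimes> w1"
      "w2 \<in> carrier R" "s [^] Suc k \<otimes> s2 = c [^] Suc k \<otimes> w2" by blast
    have "s1 \<in> carrier R" "s2 \<in> carrier R"
      using sum ideal_prod_in_carrier[OF ideal_pow_is_ideal[OF I] I] by blast+
    then have "s [^] Suc k \<otimes> (s1 \<oplus> s2) = s [^] Suc k \<otimes> s1 \<oplus> s [^] Suc k \<otimes> s2"
      using s by (simp add: r_distr del: nat_pow_Suc)
    also have "\<dots> = c [^] Suc k \<otimes> (w1 \<oplus> w2)"
      unfolding w(2,4) using c w(1,3) by (simp add: r_distr del: nat_pow_Suc)
    finally show ?case using w(1,3) by blast
  qed
qed

end

section \<open>Prime ideals of the ring of integers\<close>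

lemma quad_ring_simps [simp]:
  "carrier (quad_ring m) = quad_ints m"
  "x \<otimes>\<^bsub>quad_ring m\<^esub> y = x * y"
  "x \<oplus>\<^bsub>quad_ring m\<^esub> y = x + y"
  "\<zero>\<^bsub>quad_ring m\<^esub> = 0"
  "\<one>\<^bsub>quad_ring m\<^esub> = 1"
  by (simp_all add: quad_ring_def)

lemma quad_ring_nat_pow [simp]: "x [^]\<^bsub>quad_ring m\<^esub> (k::nat) = x ^ k"
  by (induction k) simp_all

text \<open>If \<open>p\<close> divides \<open>N(r + \<omega>)\<close>, \<open>root_ideal m p r\<close> is the kernel of \<open>u + v\<omega> \<mapsto> u - r v mod p\<close>;
  if \<open>p\<close> divides no \<open>N(r + \<omega>)\<close>, then \<open>p\<close> is inert and \<open>int_multiples m p = p\<O>\<close> is prime.\<close>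

definition root_ideal :: "nat \<Rightarrow> int \<Rightarrow> int \<Rightarrow> complex set" where
  "root_ideal m p r = {of_int u + of_int v * omega m | u v. p dvd u - r * v}"

definition int_multiples :: "nat \<Rightarrow> int \<Rightarrow> complex set" where
  "int_multiples m p = (\<lambda>w. of_int p * w) ` Z_omega m"

locale quad_integers =
  fixes m :: nat
  assumes m_pos: "m > 0" and squarefree_m: "squarefree m"
begin

lemma quad_ints_eq [simp]: "quad_ints m = Z_omega m"
  using quad_ints_eq_Z_omega[OF squarefree_m] .

sublocale cring "quad_ring m"
proof (rule cringI)
  show "abelian_group (quad_ring m)"
  proof (rule abelian_groupI)
    fix x assume "x \<in> carrier (quad_ring m)"
    then show "\<exists>y\<in>carrier (quad_ring m). y \<oplus>\<^bsub>quad_ring m\<^esub> x = \<zero>\<^bsub>quad_ring m\<^esub>"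
      by (intro bexI[of _ "- x"]) auto
  qed auto
  show "comm_monoid (quad_ring m)"
    by (rule comm_monoidI) auto
qed (simp add: algebra_simps)

lemma a_inv_quad_ring: "x \<in> Z_omega m \<Longrightarrow> \<ominus>\<^bsub>quad_ring m\<^esub> x = - x"
  by (rule minus_equality) auto

lemma ideal_quad_ringI:
  assumes "I \<subseteq> Z_omega m" "0 \<in> I"
    and add: "\<And>x y. x \<in> I \<Longrightarrow> y \<in> I \<Longrightarrow> x + y \<in> I"
    and uminus: "\<And>x. x \<in> I \<Longrightarrow> - x \<in> I"
    and absorb: "\<And>x y. x \<in> I \<Longrightarrow> y \<in> Z_omega m \<Longrightarrow> y * x \<in> I"
  shows "ideal I (quad_ring m)"
proof (rule idealI)
  show "ring (quad_ring m)" ..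
  show "subgroup I (add_monoid (quad_ring m))"
  proof
    fix x assume "x \<in> I"
    moreover have "inv\<^bsub>add_monoid (quad_ring m)\<^esub> x = \<ominus>\<^bsub>quad_ring m\<^esub> x"
      by (simp add: a_inv_def)
    ultimately show "inv\<^bsub>add_monoid (quad_ring m)\<^esub> x \<in> I"
      using a_inv_quad_ring assms(1) uminus by auto
  qed (use assms in auto)
qed (use absorb in \<open>auto simp: mult.commute\<close>)

lemma primeideal_quad_ringI:
  assumes "ideal I (quad_ring m)" "1 \<notin> I"
    and "\<And>a b. a \<in> Z_omega m \<Longrightarrow> b \<in> Z_omega m \<Longrightarrow> a * b \<in> I \<Longrightarrow> a \<in> I \<or> b \<in> I"
  shows "primeideal I (quad_ring m)"
  by (rule primeidealI) (use assms in \<open>auto simp: is_cring\<close>)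

lemma root_ideal_iff: "of_int u + of_int v * omega m \<in> root_ideal m p r \<longleftrightarrow> p dvd u - r * v"
  unfolding root_ideal_def using Z_omega_coords_unique[OF m_pos] by blast

lemma ideal_root_ideal:
  assumes root: "p dvd norm_form m r 1"
  shows "ideal (root_ideal m p r) (quad_ring m)"
proof (rule ideal_quad_ringI)
  fix x y assume "x \<in> root_ideal m p r"
  then obtain u1 v1 where x: "x = of_int u1 + of_int v1 * omega m" and d1: "p dvd u1 - r * v1"
    unfolding root_ideal_def by blast
  have "- x = of_int (- u1) + of_int (- v1) * omega m" unfolding x by simp
  then show "- x \<in> root_ideal m p r"
    using d1 root_ideal_iff by (metis dvd_minus_iff minus_diff_eq mult_minus_right diff_minus_eq_add
        uminus_add_conv_diff)
  show "x + y \<in> root_ideal m p r" if "y \<in> root_ideal m p r"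
  proof -
    from that obtain u2 v2 where y: "y = of_int u2 + of_int v2 * omega m" and d2: "p dvd u2 - r * v2"
      unfolding root_ideal_def by blast
    have "x + y = of_int (u1 + u2) + of_int (v1 + v2) * omega m"
      unfolding x y by (simp add: algebra_simps)
    moreover have "(u1 + u2) - r * (v1 + v2) = (u1 - r * v1) + (u2 - r * v2)"
      by (simp add: algebra_simps)
    then have "p dvd (u1 + u2) - r * (v1 + v2)" using dvd_add[OF d1 d2] by (simp only:)
    ultimately show ?thesis by (simp only: root_ideal_iff)
  qed
  show "y * x \<in> root_ideal m p r" if "y \<in> Z_omega m"
  proof -
    from that obtain u2 v2 where y: "y = of_int u2 + of_int v2 * omega m" by blast
    have "p dvd (u2 - r * v2) * (u1 - r * v1) - v2 * v1 * norm_form m r 1" using d1 root by simp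
    then show ?thesis
      unfolding x y Z_omega_mult_coords root_ideal_iff norm_form_root_identity[symmetric] .
  qed
next
  show "0 \<in> root_ideal m p r" using root_ideal_iff[of 0 0 p r] by simp
qed (auto simp: root_ideal_def)

lemma primeideal_root_ideal:
  assumes p: "prime p" and root: "p dvd norm_form m r 1"
  shows "primeideal (root_ideal m p r) (quad_ring m)"
proof (rule primeideal_quad_ringI)
  show "ideal (root_ideal m p r) (quad_ring m)" using root by (rule ideal_root_ideal)
  show "1 \<notin> root_ideal m p r"
    using root_ideal_iff[of 1 0 p r] prime_gt_1_int[OF p] by simp
  fix a b assume "a \<in> Z_omega m" "b \<in> Z_omega m" and ab: "a * b \<in> root_ideal m p r"
  then obtain u1 v1 u2 v2
    where a: "a = of_int u1 + of_int v1 * omega m" and b: "b = of_int u2 + of_int v2 * omega m" by blast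
  have "p dvd (u1 - r * v1) * (u2 - r * v2) - v1 * v2 * norm_form m r 1"
    using ab unfolding a b Z_omega_mult_coords root_ideal_iff norm_form_root_identity .
  then have "p dvd (u1 - r * v1) * (u2 - r * v2)" using root by (metis dvd_add diff_add_cancel dvd_mult)
  then show "a \<in> root_ideal m p r \<or> b \<in> root_ideal m p r"
    unfolding a b root_ideal_iff using p by (simp add: prime_dvd_mult_iff)
qed

lemma root_ideal_multiple:
  assumes root: "p dvd norm_form m r 1" and x: "x \<in> root_ideal m p r"
  shows "\<exists>w \<in> Z_omega m. cnj (of_int r + omega m) * x = of_int p * w"
proof -
  obtain u v where x: "x = of_int u + of_int v * omega m" and "p dvd u - r * v"
    using x unfolding root_ideal_def by blast
  then obtain t where t: "u = p * t + r * v" by (metis dvd_def eq_diff_eq)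
  obtain f where f: "norm_form m r 1 = p * f" using root by blast
  define s where "s = cnj (of_int r + omega m)"
  have "s * x = of_int p * (of_int t * s) + of_int v * ((of_int r + omega m) * s)"
    unfolding x t by (simp add: algebra_simps)
  also have "(of_int r + omega m) * s = of_int p * of_int f"
    unfolding s_def norm_form_eq_norm f by simp
  finally have "s * x = of_int p * (of_int t * s + of_int (v * f))" by (simp add: algebra_simps)
  moreover have "of_int t * s + of_int (v * f) \<in> Z_omega m"
    unfolding s_def by (intro Z_omega_add Z_omega_mult Z_omega_cnj) auto
  ultimately show ?thesis unfolding s_def by blast
qed

lemma int_multiplesI:
  assumes "p dvd u" "p dvd v"
  shows "of_int u + of_int v * omega m \<in> int_multiples m p"
proof -
  from assms obtain u' v' where "u = p * u'" "v = p * v'" by (elim dvdE)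
  then have "of_int u + of_int v * omega m = of_int p * (of_int u' + of_int v' * omega m)"
    by (simp add: algebra_simps)
  then show ?thesis unfolding int_multiples_def by (rule image_eqI) auto
qed

lemma ideal_int_multiples: "ideal (int_multiples m p) (quad_ring m)"
proof (rule ideal_quad_ringI)
  show "0 \<in> int_multiples m p" unfolding int_multiples_def by (rule rev_image_eqI[of 0]) auto
  fix x y assume "x \<in> int_multiples m p"
  then obtain w where w: "w \<in> Z_omega m" and x: "x = of_int p * w" unfolding int_multiples_def by blast
  show "- x \<in> int_multiples m p"
    unfolding int_multiples_def x by (rule rev_image_eqI[of "- w"]) (use w in auto)
  show "y * x \<in> int_multiples m p" if "y \<in> Z_omega m"
    unfolding int_multiples_def x by (rule rev_image_eqI[of "y * w"]) (use w that in auto)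
  show "x + y \<in> int_multiples m p" if "y \<in> int_multiples m p"
  proof -
    from that obtain w' where "w' \<in> Z_omega m" "y = of_int p * w'" unfolding int_multiples_def by blast
    then show ?thesis
      unfolding int_multiples_def x by (intro rev_image_eqI[of "w + w'"]) (use w in \<open>auto simp: distrib_left\<close>)
  qed
qed (auto simp: int_multiples_def)

lemma primeideal_int_multiples:
  assumes p: "prime p" and inert: "\<And>r. \<not> p dvd norm_form m r 1"
  shows "primeideal (int_multiples m p) (quad_ring m)"
proof (rule primeideal_quad_ringI)
  show "ideal (int_multiples m p) (quad_ring m)" by (rule ideal_int_multiples)
  show "1 \<notin> int_multiples m p"
  proof
    assume "1 \<in> int_multiples m p"
    then obtain w where "w \<in> Z_omega m" and w: "1 = of_int p * w" unfolding int_multiples_def by blast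
    then obtain u v where "w = of_int u + of_int v * omega m" by blast
    with w have "of_int 1 + of_int 0 * omega m = of_int (p * u) + of_int (p * v) * omega m"
      by (simp add: algebra_simps)
    then have "1 = p * u" by (rule Z_omega_coords_unique[OF m_pos, THEN conjunct1])
    then have "p dvd 1" unfolding dvd_def by blast
    then show False using p not_prime_unit by blast
  qed
  fix a b assume "a \<in> Z_omega m" "b \<in> Z_omega m" and "a * b \<in> int_multiples m p"
  then obtain u1 v1 u2 v2 w where a: "a = of_int u1 + of_int v1 * omega m"
    and b: "b = of_int u2 + of_int v2 * omega m" and w: "w \<in> Z_omega m" "a * b = of_int p * w"
    unfolding int_multiples_def by blast
  obtain Nw where Nw: "w * cnj w = of_int Nw" using Z_omega_normE[OF w(1)] .
  have "of_int (norm_form m u1 v1 * norm_form m u2 v2) = (a * cnj a) * (b * cnj b)"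
    unfolding a b Z_omega_norm by simp
  also have "\<dots> = (of_int p * w) * cnj (of_int p * w)" unfolding w(2)[symmetric] by (simp add: mult_ac)
  also have "\<dots> = of_int (p * (p * Nw))" using Nw by (simp add: mult_ac)
  finally have "p dvd norm_form m u1 v1 * norm_form m u2 v2" by (simp only: of_int_eq_iff) simp
  then have "p dvd norm_form m u1 v1 \<or> p dvd norm_form m u2 v2"
    using p by (simp add: prime_dvd_mult_iff)
  then show "a \<in> int_multiples m p \<or> b \<in> int_multiples m p"
    unfolding a b using norm_form_prime_dvd[OF p inert] int_multiplesI by blast
qed

text \<open>An element \<open>s\<close> with \<open>s q \<subseteq> p \<O>\<close> and \<open>\<not> p\<^sup>2 | N(s)\<close> bounds the \<open>q\<close>-adic valuation by
  the \<open>p\<close>-adic valuation of the norm, since \<open>x \<in> q^k\<close> gives \<open>p^(2k) | N(s)^k N(x)\<close>.\<close>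

lemma prime_ideal_above:
  assumes p: "prime p"
  obtains q s N where "primeideal q (quad_ring m)" "of_int p \<in> q" "s \<in> Z_omega m"
    "\<And>x. x \<in> q \<Longrightarrow> \<exists>w \<in> Z_omega m. s * x = of_int p * w"
    "s * cnj s = of_int N" "\<not> p\<^sup>2 dvd N"
proof (cases "\<exists>r. p dvd norm_form m r 1")
  case True
  then obtain r where root: "p dvd norm_form m r 1" and "\<not> p\<^sup>2 dvd norm_form m r 1"
    using norm_form_not_square_dvd[OF squarefree_m p] by blast
  moreover have "of_int p \<in> root_ideal m p r" using root_ideal_iff[of p 0 p r] by simp
  moreover have "cnj (of_int r + omega m) * cnj (cnj (of_int r + omega m)) = of_int (norm_form m r 1)"
    using norm_form_eq_norm[of r m] by (simp add: mult.commute)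
  ultimately show ?thesis
    using that[OF primeideal_root_ideal[OF p root]] root_ideal_multiple[OF root] by blast
next
  case False
  have "of_int p \<in> int_multiples m p" unfolding int_multiples_def by (auto intro: image_eqI[of _ _ 1])
  moreover have "\<not> p\<^sup>2 dvd 1"
  proof
    assume "p\<^sup>2 dvd 1"
    then have "p dvd 1" by (rule dvd_trans[rotated]) simp
    then show False using p not_prime_unit by blast
  qed
  ultimately show ?thesis
    using that[OF primeideal_int_multiples[OF p] _ Z_omega_one, of 1] False
    unfolding int_multiples_def by auto
qed

lemma ideal_pow_le_multiplicity_norm:
  fixes p :: int
  assumes p: "prime p" and q: "ideal q (quad_ring m)" and s: "s \<in> Z_omega m"
    and s_q: "\<And>x. x \<in> q \<Longrightarrow> \<exists>w \<in> Z_omega m. s * x = of_int p * w"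
    and Ns: "s * cnj s = of_int Ns" "\<not> p\<^sup>2 dvd Ns"
    and Nb: "b * cnj b = of_int Nb" "Nb \<noteq> 0"
    and b: "b \<in> q [^]\<^bsub>ideals_set (quad_ring m)\<^esub> k"
  shows "k \<le> multiplicity p Nb"
proof -
  have Ns0: "Ns \<noteq> 0" using Ns(2) by auto
  have "multiplicity p Ns \<le> 1"
  proof (rule ccontr)
    assume "\<not> ?thesis"
    then have "p\<^sup>2 dvd Ns" by (intro multiplicity_dvd') simp
    with Ns(2) show False ..
  qed
  obtain w where w: "w \<in> Z_omega m" "s ^ k * b = of_int p ^ k * w"
    using ideal_pow_scaled_into_multiples[OF q, of s "of_int p"] s s_q b by simp blast
  obtain Nw where Nw: "w * cnj w = of_int Nw" using Z_omega_normE[OF w(1)] .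
  have "of_int (Ns ^ k * Nb) = (s ^ k * b) * cnj (s ^ k * b)"
    using Ns(1) Nb(1) by (simp add: power_mult_distrib mult_ac flip: power_mult_distrib)
  also have "\<dots> = (of_int p ^ k * of_int p ^ k) * (w * cnj w)"
    unfolding w(2) by (simp add: mult_ac)
  also have "\<dots> = of_int (p ^ (2 * k) * Nw)"
    unfolding Nw by (simp add: mult_2 power_add)
  finally have "Ns ^ k * Nb = p ^ (2 * k) * Nw" by (simp only: of_int_eq_iff)
  then have "2 * k \<le> multiplicity p (Ns ^ k * Nb)"
    using Ns0 Nb(2) p by (intro multiplicity_geI) (auto simp: not_prime_unit)
  also have "\<dots> = multiplicity p (Ns ^ k) + multiplicity p Nb"
    using Ns0 Nb(2) by (intro prime_elem_multiplicity_mult_distrib prime_imp_prime_elem p) auto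
  also have "\<dots> \<le> k + multiplicity p Nb"
    unfolding prime_elem_multiplicity_power_distrib[OF prime_imp_prime_elem[OF p] Ns0]
    using mult_le_mono2[OF \<open>multiplicity p Ns \<le> 1\<close>, of k] by linarith
  finally show ?thesis by simp
qed

lemma ideal_pow_quad_ring_power:
  assumes q: "ideal q (quad_ring m)" and x: "x \<in> q"
  shows "x ^ k \<in> q [^]\<^bsub>ideals_set (quad_ring m)\<^esub> k"
  using ideal_pow_nat_pow[OF q, of x 1 k] x unfolding ideal_pow_one[OF q]
  by (simp only: quad_ring_nat_pow mult_1)

lemma ideal_pow_quad_ring_absorb:
  fixes k :: nat
  assumes q: "ideal q (quad_ring m)" and "x \<in> q [^]\<^bsub>ideals_set (quad_ring m)\<^esub> k" "y \<in> Z_omega m"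
  shows "y * x \<in> q [^]\<^bsub>ideals_set (quad_ring m)\<^esub> k"
  using ideal.I_l_closed[OF ideal_pow_is_ideal[OF q]] assms(2,3) by simp

lemma int_multiple_in_ideal_pow:
  fixes l :: nat
  assumes q: "ideal q (quad_ring m)" and p: "of_int p \<in> q" and "p ^ l dvd c" and z: "z \<in> Z_omega m"
  shows "of_int c * z \<in> q [^]\<^bsub>ideals_set (quad_ring m)\<^esub> l"
proof -
  obtain t where "c = p ^ l * t" using assms(3) by blast
  then have "of_int c * z = (of_int t * z) * of_int p ^ l" by (simp add: mult_ac)
  also have "\<dots> \<in> q [^]\<^bsub>ideals_set (quad_ring m)\<^esub> l"
    using z by (intro ideal_pow_quad_ring_absorb[OF q] ideal_pow_quad_ring_power[OF q p]) auto
  finally show ?thesis .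
qed

lemma sqrt_neg_in_ramified_prime_ideal:
  assumes q: "primeideal q (quad_ring m)" and p: "of_int p \<in> q" "p dvd int m"
  shows "sqrt_neg m \<in> q"
proof -
  obtain m' where m': "int m = p * m'" using p(2) by blast
  have "sqrt_neg m * sqrt_neg m = of_int (- m') * of_int p"
    using arg_cong[OF m', of "of_int :: int \<Rightarrow> complex"] by (simp add: sqrt_neg_mult_self)
  also have "\<dots> \<in> q"
    using ideal.I_l_closed[OF primeideal.axioms(1)[OF q] p(1), of "of_int (- m')"]
      Z_omega_of_int[of "- m'" m] by simp
  finally show ?thesis using primeideal.I_prime[OF q, of "sqrt_neg m" "sqrt_neg m"] by auto
qed

lemma ramified_prime_in_ideal_square:
  assumes p: "prime p" "p dvd int m" and q: "primeideal q (quad_ring m)" "of_int p \<in> q"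
  shows "of_int p \<in> q [^]\<^bsub>ideals_set (quad_ring m)\<^esub> (2::nat)"
proof -
  have q_ideal: "ideal q (quad_ring m)" using q(1) by (rule primeideal.axioms(1))
  obtain m' where m': "int m = p * m'" using p(2) by blast
  have "coprime p m'"
  proof (rule ccontr)
    assume "\<not> coprime p m'"
    then have "p dvd m'" using p(1) prime_imp_coprime by blast
    then have "p\<^sup>2 dvd int m" unfolding m' by (simp add: power2_eq_square mult_dvd_mono)
    then show False using squarefree_imp_prime_square_not_dvd[OF squarefree_m p(1)] by blast
  qed
  then obtain u w where "u * p + w * m' = 1" using bezout_int[of p m'] by auto
  then have "p = p * (u * p + w * m')" by simp
  also have "\<dots> = u * p\<^sup>2 + w * int m" unfolding m' by (simp add: algebra_simps power2_eq_square)
  finally have "(of_int p :: complex) = of_int (u * p\<^sup>2 + w * int m)" by (rule arg_cong)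
  also have "\<dots> = of_int u * of_int p ^ 2 + of_int (- w) * sqrt_neg m ^ 2"
    by (simp add: power2_eq_square sqrt_neg_mult_self)
  also have "\<dots> \<in> q [^]\<^bsub>ideals_set (quad_ring m)\<^esub> (2::nat)"
  proof -
    have "of_int u * of_int p ^ 2 \<in> q [^]\<^bsub>ideals_set (quad_ring m)\<^esub> (2::nat)"
      by (intro ideal_pow_quad_ring_absorb[OF q_ideal] ideal_pow_quad_ring_power[OF q_ideal q(2)]) simp
    moreover have "of_int (- w) * sqrt_neg m ^ 2 \<in> q [^]\<^bsub>ideals_set (quad_ring m)\<^esub> (2::nat)"
      by (intro ideal_pow_quad_ring_absorb[OF q_ideal] ideal_pow_quad_ring_power[OF q_ideal]
          sqrt_neg_in_ramified_prime_ideal[OF q p(2)] Z_omega_of_int)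
    ultimately show ?thesis
      using additive_subgroup.a_closed[OF ideal.axioms(1)[OF ideal_pow_is_ideal[OF q_ideal]]]
      by (simp only: quad_ring_simps)
  qed
  finally show ?thesis .
qed

lemma n_sqrt_neg_in_ideal_pow_ramified:
  fixes l :: nat
  assumes p: "prime p" "p dvd int m" and q: "primeideal q (quad_ring m)" "of_int p \<in> q"
    and n: "p ^ a dvd int n" and l: "l \<le> 2 * a + 1"
  shows "of_nat n * sqrt_neg m \<in> q [^]\<^bsub>ideals_set (quad_ring m)\<^esub> l"
proof -
  have q_ideal: "ideal q (quad_ring m)" using q(1) by (rule primeideal.axioms(1))
  obtain t where t: "int n = p ^ a * t" using n by blast
  have "of_int p ^ a \<in> q [^]\<^bsub>ideals_set (quad_ring m)\<^esub> (2 * a)"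
    using ideal_pow_nat_pow[OF q_ideal ramified_prime_in_ideal_square[OF p q]]
    by (simp only: quad_ring_nat_pow)
  moreover have "sqrt_neg m \<in> q [^]\<^bsub>ideals_set (quad_ring m)\<^esub> (1::nat)"
    unfolding ideal_pow_one[OF q_ideal] by (rule sqrt_neg_in_ramified_prime_ideal[OF q p(2)])
  ultimately have "of_int p ^ a * sqrt_neg m \<in> q [^]\<^bsub>ideals_set (quad_ring m)\<^esub> (2 * a + 1)"
    using ideal_pow_mult[OF q_ideal] by (simp only: quad_ring_simps)
  then have "of_int t * (of_int p ^ a * sqrt_neg m) \<in> q [^]\<^bsub>ideals_set (quad_ring m)\<^esub> (2 * a + 1)"
    by (rule ideal_pow_quad_ring_absorb[OF q_ideal]) simp
  also have "\<dots> \<subseteq> q [^]\<^bsub>ideals_set (quad_ring m)\<^esub> l"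
    by (rule ideal_pow_antimono[OF q_ideal l])
  finally show ?thesis
    using arg_cong[OF t, of "of_int :: int \<Rightarrow> complex"] by (simp add: mult_ac)
qed

lemma n_sqrt_neg_in_ideal_pow:
  fixes p A B \<gamma> :: int
  assumes p: "prime p" and q: "primeideal q (quad_ring m)" "of_int p \<in> q"
    and l: "odd l" and n: "n > 0" and \<gamma>: "\<gamma> \<noteq> 0" and B: "B > 0" "coprime A B"
    and eq: "A ^ l * (int n ^ 2 * int m) = B ^ l * (int n ^ 2 * int m + \<gamma> ^ 2)"
    and lt: "multiplicity p \<gamma> < multiplicity p (int n * int m)"
  shows "of_nat n * sqrt_neg m \<in> q [^]\<^bsub>ideals_set (quad_ring m)\<^esub> l"
proof -
  note bound = high_valuation_from_norm_equation[OF p l n m_pos squarefree_m \<gamma> B eq lt]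
  show ?thesis
  proof (cases "p dvd int m")
    case True
    with bound have "l \<le> 2 * multiplicity p (int n) + 1" by simp
    then show ?thesis by (intro n_sqrt_neg_in_ideal_pow_ramified[OF p(1) True q multiplicity_dvd])
  next
    case False
    with bound have "p ^ l dvd int n" by (intro multiplicity_dvd') simp_all
    then show ?thesis
      using int_multiple_in_ideal_pow[OF primeideal.axioms(1)[OF q(1)] q(2), of l "int n" "sqrt_neg m"]
      by simp
  qed
qed

lemma norm_dvd_if_ideal_ord_bounded:
  fixes \<gamma> :: int
  assumes l: "odd l" and n: "n > 0" and \<eta>: "\<eta> \<in> quad_field m"
    and \<eta>_l: "\<eta> ^ l = 1 + of_int \<gamma> / (of_nat n * sqrt_neg m)"
    and ord: "\<forall>q. primeideal q (quad_ring m) \<and> q \<noteq> {0} \<longrightarrow>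
                ideal_ord (quad_ring m) q (of_nat n * sqrt_neg m) < l"
  shows "int n * int m dvd \<gamma>"
proof (rule ccontr)
  assume not_dvd: "\<not> int n * int m dvd \<gamma>"
  then have \<gamma>: "\<gamma> \<noteq> 0" by auto
  obtain A B where B: "B > 0" "coprime A B"
    and eq: "A ^ l * (int n ^ 2 * int m) = B ^ l * (int n ^ 2 * int m + \<gamma> ^ 2)"
    using norm_power_equation[OF m_pos n \<eta> \<eta>_l] by blast
  obtain p where p: "prime p" and lt: "multiplicity p \<gamma> < multiplicity p (int n * int m)"
    using not_dvd \<gamma> n m_pos multiplicity_le_imp_dvd[of "int n * int m" \<gamma>] by (force simp: not_less)
  obtain q s N where q: "primeideal q (quad_ring m)" "of_int p \<in> q" and s: "s \<in> Z_omega m"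
    "\<And>x. x \<in> q \<Longrightarrow> \<exists>w \<in> Z_omega m. s * x = of_int p * w" "s * cnj s = of_int N" "\<not> p\<^sup>2 dvd N"
    using prime_ideal_above[OF p] by blast
  have "q \<noteq> {0}" using q(2) prime_gt_0_int[OF p] by auto
  have "of_nat n * sqrt_neg m * cnj (of_nat n * sqrt_neg m) = of_int (int (n\<^sup>2 * m))"
    using scaled_sqrt_neg_mult_self[of n m] by simp
  moreover have "int (n\<^sup>2 * m) \<noteq> 0" using n m_pos by simp
  ultimately have "l \<le> ideal_ord (quad_ring m) q (of_nat n * sqrt_neg m)"
    using n_sqrt_neg_in_ideal_pow[OF p q l n \<gamma> B eq lt]
      ideal_pow_le_multiplicity_norm[OF p primeideal.axioms(1)[OF q(1)] s]
    by (intro ideal_ord_geI) blast+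
  with ord q \<open>q \<noteq> {0}\<close> show False by fastforce
qed

lemma Z_omega_if_power_in_Z_omega:
  assumes "\<eta> \<in> quad_field m" "\<eta> ^ l \<in> Z_omega m" "l > 0"
  shows "\<eta> \<in> Z_omega m"
proof -
  have "algebraic_int \<eta>"
  proof (rule algebraic_int_root[OF algebraic_int_Z_omega[OF assms(2)], of "monom 1 l"])
    show "poly (monom 1 l) \<eta> = \<eta> ^ l" by (simp add: poly_monom)
  qed (use assms(3) in \<open>auto simp: degree_monom_eq coeff_monom\<close>)
  with assms(1) show ?thesis using quad_ints_eq unfolding quad_ints_def by blast
qed

lemma trace_dvd_two:
  assumes \<eta>: "\<eta> \<in> Z_omega m" and l: "odd l" and sum: "\<eta> ^ l + cnj \<eta> ^ l = 2"
  shows "\<eta> + cnj \<eta> \<in> {1, -1, -2, 2}"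
proof -
  obtain u v where uv: "\<eta> = of_int u + of_int v * omega m" using \<eta> by blast
  define C where "C = 2 * u + v * omega_trace m"
  have C: "\<eta> + cnj \<eta> = of_int C" unfolding uv C_def by (simp add: cnj_omega algebra_simps)
  define Q where "Q = (\<Sum>i<l. \<eta> ^ i * (- cnj \<eta>) ^ (l - 1 - i))"
  obtain k where k: "l = Suc k" using l by (cases l) auto
  have "\<eta> ^ l + cnj \<eta> ^ l = \<eta> ^ l - (- cnj \<eta>) ^ l" using l by (simp add: power_minus_odd)
  also have "\<dots> = of_int C * Q"
    unfolding Q_def k using diff_power_eq_sum[of \<eta> k "- cnj \<eta>"] C by simp
  finally have CQ: "of_int C * Q = 2" using sum by simp
  have "Q \<in> Z_omega m" unfolding Q_def using \<eta> by (intro Z_omega_sum Z_omega_mult Z_omega_power) auto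
  then obtain u' v' where "Q = of_int u' + of_int v' * omega m" by blast
  with CQ have "of_int (C * u') + of_int (C * v') * omega m = of_int 2 + of_int 0 * omega m"
    by (simp add: algebra_simps)
  then have "C * u' = 2" using Z_omega_coords_unique[OF m_pos] by blast
  then have "C dvd 2" by (metis dvd_triv_left)
  moreover have "C \<noteq> 0" using CQ by auto
  ultimately have "C \<in> {1, -1, -2, 2}" using dvd_imp_le_int[of 2 C] by auto
  then show ?thesis unfolding C by auto
qed

end

lemma prime_exponent_odd:
  assumes "\<forall>c \<in> {1, -1, -2 :: complex}. \<forall>x \<in> quad_ints m. x ^ l + (c - x) ^ l - 2 \<noteq> 0"
    and "prime l"
  shows "odd l"
proof (rule ccontr)
  assume "\<not> odd l"
  then have l: "l = 2"
    using prime_odd_nat[OF assms(2)] prime_ge_2_nat[OF assms(2)] by (metis le_neq_implies_less)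
  have "(-1 :: complex) = of_rat (-1) + of_rat 0 * sqrt_neg m" by simp
  then have "(-1 :: complex) \<in> quad_field m" unfolding quad_field_def by blast
  then have "(-1 :: complex) \<in> quad_ints m"
    unfolding quad_ints_def using int_imp_algebraic_int[OF Ints_minus[OF Ints_1]] by blast
  then have "(-1) ^ 2 + (-2 - (-1)) ^ 2 - 2 \<noteq> (0 :: complex)" using assms(1)[unfolded l] by blast
  then show False by simp
qed

theorem lemma9p3:
  fixes l R S T S' v m n :: nat
  assumes "prime l"
    and "R > 0" "S > 0" "T > 0"
    and "coprime R S" "coprime R T" "coprime S T"
    and "S' = odd_part_rad S"
    and "v > 0" "S * S' = v ^ 2"
    and "m > 0" "squarefree m" "n > 0" "T * S' = m * n ^ 2"
    and i: "\<forall>q. primeideal q (quad_ring m) \<and> q \<noteq> {0} \<longrightarrow>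
              ideal_ord (quad_ring m) q (of_nat n * sqrt_neg m) < l"
    and ii: "\<forall>c \<in> {1, -1, -2 :: complex}. \<forall>x \<in> quad_ints m. x ^ l + (c - x) ^ l - 2 \<noteq> 0"
    and iii: "\<forall>x \<in> quad_ints m. x ^ l + (2 - x) ^ l - 2 = 0 \<longrightarrow> x = 1"
  shows "\<forall>(\<sigma>::int) (\<eta>::complex). \<eta> \<in> quad_field m \<and>
           of_nat v * of_int \<sigma> ^ l + of_nat n * sqrt_neg m = of_nat n * sqrt_neg m * \<eta> ^ l
           \<longrightarrow> \<sigma> = 0 \<and> \<eta> = 1"
proof (intro allI impI, elim conjE)
  fix \<sigma> :: int and \<eta> :: complex
  assume \<eta>: "\<eta> \<in> quad_field m"
    and eq: "of_nat v * of_int \<sigma> ^ l + of_nat n * sqrt_neg m = of_nat n * sqrt_neg m * \<eta> ^ l"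
  interpret quad_integers m using \<open>m > 0\<close> \<open>squarefree m\<close> by unfold_locales
  define \<gamma> where "\<gamma> = int v * \<sigma> ^ l"
  have \<eta>_l: "\<eta> ^ l = 1 + of_int \<gamma> / (of_nat n * sqrt_neg m)"
    using eq \<open>n > 0\<close> sqrt_neg_nonzero[OF m_pos] unfolding \<gamma>_def by (simp add: field_simps)
  have "odd l" using ii \<open>prime l\<close> by (rule prime_exponent_odd)
  obtain t where "\<gamma> = int n * int m * t"
    using norm_dvd_if_ideal_ord_bounded[OF \<open>odd l\<close> \<open>n > 0\<close> \<eta> \<eta>_l i] by blast
  then have "\<eta> ^ l = 1 - of_int t * sqrt_neg m"
    unfolding \<eta>_l using divide_scaled_sqrt_neg[OF \<open>n > 0\<close> m_pos] by simp
  also have "\<dots> \<in> Z_omega m"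
    by (intro Z_omega_diff Z_omega_mult Z_omega_one Z_omega_of_int sqrt_neg_in_Z_omega)
  finally have \<eta>_int: "\<eta> \<in> Z_omega m"
    by (rule Z_omega_if_power_in_Z_omega[OF \<eta> _ odd_pos[OF \<open>odd l\<close>]])
  have sum: "\<eta> ^ l + cnj \<eta> ^ l = 2" using \<eta>_l by (rule power_plus_cnj_power_eq_2)
  then have "\<eta> + cnj \<eta> \<in> {1, -1, -2, 2}" using \<eta>_int \<open>odd l\<close> by (intro trace_dvd_two)
  moreover have "\<eta> ^ l + ((\<eta> + cnj \<eta>) - \<eta>) ^ l - 2 = 0" using sum by simp
  ultimately have "\<eta> = 1" using ii iii \<eta>_int by (auto simp only: quad_ints_eq insert_iff)
  with eq \<open>v > 0\<close> show "\<sigma> = 0 \<and> \<eta> = 1" by simp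
qed

end
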